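(* Let $q$ be a prime power, and let $m$ and $j$ be positive integers with $m>1$, $1\le j\le m-1$ and $\gcd(j,q-1)=1$. Let $\lambda_j(x)=\sum_{0\le i_1<i_2<\cdots<i_j\le m-1}x^{q^{i_1}+\cdots+q^{i_j}}$ and let $h(x)\in\mathbf{F}_q[x]$. Then $x\,h(\lambda_j(x))$ is a permutation polynomial of $\mathbf{F}_{q^m}$ if and only if $h(0)\ne 0$ and $x\,h(x)^j$ permutes $\mathbf{F}_q$.
   Context: $\lambda_j(x)$ is the $j$-th elementary symmetric polynomial $\sigma_j$ evaluated at $x,x^q,\ldots,x^{q^{m-1}}$; it lies in $\mathbf{F}_q[x]$ and takes values in $\mathbf{F}_q$ on $\mathbf{F}_{q^m}$. A permutation polynomial of a finite field $K$ is a polynomial inducing a bijection $K\to K$. *)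

theory Defs
  imports "HOL-Computational_Algebra.Polynomial" "HOL-Computational_Algebra.Primes"
begin

definition prime_power :: "nat \<Rightarrow> bool" where
  "prime_power q \<longleftrightarrow> (\<exists>p k. prime p \<and> k > 0 \<and> q = p ^ k)"

text \<open>The subfield F_q of a finite field K with q^m elements: the roots of x^q - x.\<close>
definition subfield_Fq :: "nat \<Rightarrow> 'a::field set" where
  "subfield_Fq q = {x. x ^ q = x}"

definition lambda_poly :: "nat \<Rightarrow> nat \<Rightarrow> nat \<Rightarrow> 'a::comm_ring_1 poly" where
  "lambda_poly q m j = (\<Sum>S\<in>{S. S \<subseteq> {0..<m} \<and> card S = j}. monom 1 (\<Sum>i\<in>S. q ^ i))"

definition permutes_set :: "'a::comm_ring_1 poly \<Rightarrow> 'a set \<Rightarrow> bool" where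
  "permutes_set f K \<longleftrightarrow> bij_betw (poly f) K K"

end

theory Submission
  imports Defs "HOL-Number_Theory.Residues"
begin

text \<open>
  Write L for the function of lambda_j on K = F_{q^m} and F for F_q. The Frobenius map
  x |-> x^q permutes the conjugates x^{q^i} cyclically, so L maps K into F, and
  L (c x) = c^j L x for c in F. Hence f x = x h(L x) satisfies L (f x) = g (L x) with
  g y = y h(y)^j. Counting roots against deg L < (q^m - 1)/(q - 1) shows that L is not
  identically zero and that it has a nonzero root (otherwise L^{q-1} - 1 would vanish on all of
  K - {0}); as c |-> c^j permutes F, the former makes L map K onto F. If f is a bijection, the
  nonzero root forces h 0 \<noteq> 0 and g is onto F. Conversely, if g permutes F then h has no
  zero on F, so f x = f x' gives L x = L x' and then x = x'.
\<close>

(* Otherwise the HOL-Algebra polynomials imported with Residues shadow these two names. *)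
hide_const (open) UnivPoly.coeff UnivPoly.monom

(* The library's finite_field_power_card_eq_same is stated for the class finite_field, which a
   type of sort {field, finite} is not known to belong to; Lagrange's theorem for the unit group
   gives the same fact here. *)
lemma field_power_card_eq_self:
  fixes x :: "'a::{field,finite}"
  shows "x ^ card (UNIV :: 'a set) = x"
proof (cases "x = 0")
  case True
  then show ?thesis by (simp add: finite_UNIV_card_ge_0)
next
  case False
  define G :: "'a monoid" where "G = \<lparr>carrier = UNIV - {0}, monoid.mult = (*), one = 1\<rparr>"
  interpret group G
    by (rule groupI) (auto simp: G_def mult.assoc intro!: bexI[of _ "inverse _"])
  have pow: "y [^]\<^bsub>G\<^esub> n = y ^ n" for y and n :: nat
    by (induction n) (simp_all add: G_def)
  have "x ^ order G = 1"
    using pow_order_eq_1[of x] False unfolding pow by (simp add: G_def)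
  moreover have "order G = card (UNIV :: 'a set) - 1"
    by (simp add: order_def G_def card_Diff_singleton)
  ultimately have "x * x ^ (card (UNIV :: 'a set) - 1) = x" by simp
  then show ?thesis
    using finite_UNIV_card_ge_0[where ?'a = 'a] by (simp flip: power_Suc)
qed

lemma prime_power_card_imp_CHAR_power:
  assumes "prime_power q" and "card (UNIV :: 'a::{field,finite} set) = q ^ m" and "m > 0"
  shows "\<exists>k>0. q = CHAR('a) ^ k"
proof -
  obtain p k where pk: "prime p" "k > 0" "q = p ^ k"
    using assms(1) unfolding prime_power_def by blast
  have "prime CHAR('a)"
    by (intro prime_CHAR_semidom finite_imp_CHAR_pos) simp
  moreover have "CHAR('a) dvd p ^ (k * m)"
    using CHAR_dvd_CARD[where 'a = 'a] assms(2) pk(3) by (simp add: power_mult)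
  ultimately have "CHAR('a) = p"
    using pk(1) by (metis prime_dvd_power primes_dvd_imp_eq)
  then show ?thesis using pk by blast
qed

lemma prime_power_ge_2: "prime_power q \<Longrightarrow> q \<ge> 2"
proof -
  assume "prime_power q"
  then obtain p k where "prime p" "k > 0" "q = p ^ k"
    unfolding prime_power_def by blast
  then have "p \<le> q"
    using self_le_power[of p k] prime_gt_0_nat[of p] by simp
  then show "q \<ge> 2"
    using prime_ge_2_nat[OF \<open>prime p\<close>] by linarith
qed

lemma nat_geometric_sum:
  assumes "(q::nat) \<ge> 1"
  shows "(q - 1) * (\<Sum>i<m. q ^ i) = q ^ m - 1"
proof -
  have "int ((q - 1) * (\<Sum>i<m. q ^ i)) = (int q - 1) * (\<Sum>i<m. int q ^ i)"
    using assms by simp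
  also have "\<dots> = int q ^ m - 1"
    by (rule power_diff_1_eq[symmetric])
  also have "\<dots> = int (q ^ m - 1)"
    using assms by simp
  finally show ?thesis by linarith
qed

lemma sum_power_less_power:
  assumes "(q::nat) \<ge> 2" and "S \<subseteq> {..<m}"
  shows "(\<Sum>i\<in>S. q ^ i) < q ^ m"
proof -
  have "(\<Sum>i\<in>S. q ^ i) \<le> (\<Sum>i<m. q ^ i)"
    using assms(2) by (intro sum_mono2) auto
  also have "\<dots> \<le> (q - 1) * (\<Sum>i<m. q ^ i)"
    using mult_le_mono1[of 1 "q - 1" "\<Sum>i<m. q ^ i"] assms(1) by linarith
  also have "\<dots> < q ^ m"
    using nat_geometric_sum[of q m] assms(1) by simp
  finally show ?thesis .
qed

lemma inj_on_sum_power: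
  assumes "(q::nat) \<ge> 2"
  shows "inj_on (\<lambda>S. \<Sum>i\<in>S. q ^ i) (Pow {..<m})"
proof (induction m)
  case 0
  then show ?case by simp
next
  case (Suc m)
  have top: "(\<Sum>i\<in>U. q ^ i) = q ^ m + (\<Sum>i\<in>U - {m}. q ^ i)"
    if "U \<in> Pow {..<Suc m}" and "m \<in> U" for U
    using that finite_subset[of U "{..<Suc m}"] by (simp add: sum.remove)
  have no_top: "(\<Sum>i\<in>U. q ^ i) < q ^ m"
    if "U \<in> Pow {..<Suc m}" and "m \<notin> U" for U
    using that by (intro sum_power_less_power assms) (auto simp: less_Suc_eq)
  show ?case
  proof (rule inj_onI)
    fix S T assume S: "S \<in> Pow {..<Suc m}" and T: "T \<in> Pow {..<Suc m}"
      and eq: "(\<Sum>i\<in>S. q ^ i) = (\<Sum>i\<in>T. q ^ i)"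
    have m: "m \<in> S \<longleftrightarrow> m \<in> T"
      using eq top[OF S] top[OF T] no_top[OF S] no_top[OF T] by (metis not_add_less1)
    have "(\<Sum>i\<in>S - {m}. q ^ i) = (\<Sum>i\<in>T - {m}. q ^ i)"
    proof (cases "m \<in> S")
      case True
      then show ?thesis using eq top[OF S] top[OF T] m by simp
    next
      case False
      then show ?thesis using eq m by simp
    qed
    then have "S - {m} = T - {m}"
      by (rule inj_onD[OF Suc.IH]) (use S T in auto)
    then show "S = T"
      using m by blast
  qed
qed

lemma bij_betw_Suc_mod: "m > 0 \<Longrightarrow> bij_betw (\<lambda>i. Suc i mod m) {0..<m} {0..<m}"
  by (rule bij_betw_byWitness[where f' = "\<lambda>i. if i = 0 then m - 1 else i - 1"])
     (auto simp: mod_Suc)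

lemma bij_betw_image_card_subsets:
  assumes "bij_betw f A A"
  shows "bij_betw (image f) {S. S \<subseteq> A \<and> card S = j} {S. S \<subseteq> A \<and> card S = j}"
proof -
  have Pow: "bij_betw (image f) (Pow A) (Pow A)"
    using bij_betw_Pow[OF assms] .
  have card: "card (f ` S) = card S" if "S \<subseteq> A" for S
    using assms that by (meson bij_betw_def card_image inj_on_subset)
  have "image f ` {S. S \<subseteq> A \<and> card S = j} = {S. S \<subseteq> A \<and> card S = j}"
  proof (intro equalityI subsetI)
    fix T assume T: "T \<in> {S. S \<subseteq> A \<and> card S = j}"
    then have "T \<in> image f ` Pow A"
      using Pow by (simp add: bij_betw_def)
    then obtain S where "S \<subseteq> A" "T = f ` S"
      by blast
    with T show "T \<in> image f ` {S. S \<subseteq> A \<and> card S = j}"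
      using card by auto
  qed (use Pow card in \<open>auto simp: bij_betw_def\<close>)
  moreover have "inj_on (image f) {S. S \<subseteq> A \<and> card S = j}"
    using Pow by (auto simp: bij_betw_def intro: inj_on_subset)
  ultimately show ?thesis
    by (simp add: bij_betw_def)
qed

lemma power_eq_one_if_coprime_exponents:
  fixes x :: "'a::monoid_mult"
  assumes "x ^ a = 1" and "x ^ b = 1" and "gcd a b = 1"
  shows "x = 1"
proof (cases "a = 0")
  case True
  then show ?thesis using assms by simp
next
  case False
  then obtain u v where "a * u = b * v + 1"
    using bezout_nat[of a b] assms(3) by auto
  then have "x ^ (a * u) = x ^ (b * v) * x"
    by (simp add: power_commutes)
  then show ?thesis
    using assms(1,2) by (simp add: power_mult)
qed

lemma subfield_Fq_mult:
  "a \<in> subfield_Fq q \<Longrightarrow> b \<in> subfield_Fq q \<Longrightarrow> a * b \<in> subfield_Fq q"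
  by (simp add: subfield_Fq_def power_mult_distrib)

lemma subfield_Fq_power: "a \<in> subfield_Fq q \<Longrightarrow> a ^ n \<in> subfield_Fq q"
  by (simp add: subfield_Fq_def flip: power_mult) (metis mult.commute power_mult)

lemma subfield_Fq_divide:
  "a \<in> subfield_Fq q \<Longrightarrow> b \<in> subfield_Fq q \<Longrightarrow> a / b \<in> subfield_Fq q"
  by (simp add: subfield_Fq_def power_divide)

lemma subfield_Fq_power_q_power: "a \<in> subfield_Fq q \<Longrightarrow> a ^ q ^ i = a"
  by (induction i) (simp_all add: subfield_Fq_def power_mult)

lemma subfield_Fq_power_q_minus_1:
  assumes "a \<in> subfield_Fq q" and "a \<noteq> 0" and "q > 0"
  shows "a ^ (q - 1) = (1 :: 'a::field)"
proof -
  have "a * a ^ (q - 1) = a * 1"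
    using assms by (simp add: subfield_Fq_def flip: power_Suc)
  then show ?thesis
    using assms(2) by simp
qed

lemma bij_betw_power_subfield_Fq:
  assumes "q > 0" and "j > 0" and "gcd j (q - 1) = 1"
  shows "bij_betw (\<lambda>c. c ^ j) (subfield_Fq q) (subfield_Fq q :: 'a::{field,finite} set)"
proof -
  have "c = d" if "c \<in> subfield_Fq q" "d \<in> subfield_Fq q" "c ^ j = d ^ j" for c d :: 'a
  proof (cases "c = 0 \<or> d = 0")
    case True
    then show ?thesis using that assms(2) by (auto simp: power_0_left)
  next
    case False
    have "(c / d) ^ (q - 1) = 1"
      using subfield_Fq_power_q_minus_1[OF subfield_Fq_divide[OF that(1,2)]] False assms(1) by simp
    moreover have "(c / d) ^ j = 1"
      using that(3) False by (simp add: power_divide)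
    ultimately have "c / d = 1"
      using assms(3) by (metis power_eq_one_if_coprime_exponents)
    then show ?thesis using False by simp
  qed
  then have "inj_on (\<lambda>c. c ^ j) (subfield_Fq q :: 'a set)"
    by (intro inj_onI)
  moreover have "(\<lambda>c. c ^ j) ` subfield_Fq q \<subseteq> (subfield_Fq q :: 'a set)"
    using subfield_Fq_power by blast
  ultimately show ?thesis
    by (simp add: bij_betw_def endo_inj_surj)
qed

lemma poly_lambda_poly:
  "poly (lambda_poly q m j) x = (\<Sum>S\<in>{S. S \<subseteq> {0..<m} \<and> card S = j}. \<Prod>i\<in>S. x ^ q ^ i)"
  unfolding lambda_poly_def poly_sum poly_monom by (simp add: power_sum)

lemma poly_lambda_poly_0:
  assumes "q > 0" and "j > 0"
  shows "poly (lambda_poly q m j) 0 = (0 :: 'a::comm_ring_1)"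
  unfolding poly_lambda_poly
proof (intro sum.neutral ballI)
  fix S assume "S \<in> {S. S \<subseteq> {0..<m} \<and> card S = j}"
  then have "S \<noteq> {}" "finite S"
    using assms(2) finite_subset by fastforce+
  then show "(\<Prod>i\<in>S. (0::'a) ^ q ^ i) = 0"
    using assms(1) by (intro prod_zero) (auto simp: power_0_left)
qed

lemma poly_lambda_poly_mult:
  assumes "c \<in> subfield_Fq q"
  shows "poly (lambda_poly q m j) (c * x) = c ^ j * poly (lambda_poly q m j) x"
proof -
  have "(\<Prod>i\<in>S. (c * x) ^ q ^ i) = c ^ j * (\<Prod>i\<in>S. x ^ q ^ i)" if "card S = j" for S
    using that subfield_Fq_power_q_power[OF assms]
    by (simp add: power_mult_distrib prod.distrib)
  then show ?thesis
    unfolding poly_lambda_poly sum_distrib_left by (intro sum.cong) auto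
qed

context
  fixes q k :: nat
  assumes CHAR_prime: "prime CHAR('a::field)" and q_eq: "q = CHAR('a) ^ k"
begin

lemma subfield_Fq_sum:
  assumes "\<And>i. i \<in> A \<Longrightarrow> f i \<in> subfield_Fq q"
  shows "sum f A \<in> (subfield_Fq q :: 'a set)"
proof -
  have "sum f A ^ q = (\<Sum>i\<in>A. f i ^ q)"
    by (rule freshmans_dream_sum'[OF CHAR_prime q_eq])
  also have "\<dots> = sum f A"
    using assms by (simp add: subfield_Fq_def)
  finally show ?thesis
    by (simp add: subfield_Fq_def)
qed

lemma subfield_Fq_poly:
  assumes "\<forall>i. coeff p i \<in> subfield_Fq q" and "y \<in> subfield_Fq q"
  shows "poly p y \<in> (subfield_Fq q :: 'a set)"
  unfolding poly_altdef using assms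
  by (intro subfield_Fq_sum subfield_Fq_mult subfield_Fq_power) auto

lemma poly_lambda_poly_in_subfield:
  assumes "m > 0" and "x ^ q ^ m = x"
  shows "poly (lambda_poly q m j) x \<in> (subfield_Fq q :: 'a set)"
proof -
  define \<sigma> where "\<sigma> i = Suc i mod m" for i
  define G where "G S = (\<Prod>i\<in>S. x ^ q ^ i)" for S
  define J where "J = {S. S \<subseteq> {0..<m} \<and> card S = j}"
  have \<sigma>: "bij_betw \<sigma> {0..<m} {0..<m}"
    unfolding \<sigma>_def using bij_betw_Suc_mod assms(1) .
  have frobenius_shift: "(x ^ q ^ i) ^ q = x ^ q ^ \<sigma> i" if "i < m" for i
  proof -
    have "(x ^ q ^ i) ^ q = x ^ q ^ Suc i"
      by (simp add: mult.commute flip: power_mult)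
    then show ?thesis
      using that assms(2) by (cases "Suc i = m") (simp_all add: \<sigma>_def)
  qed
  have Frobenius_G: "G S ^ q = G (\<sigma> ` S)" if "S \<in> J" for S
  proof -
    have "G S ^ q = (\<Prod>i\<in>S. x ^ q ^ \<sigma> i)"
      using that unfolding G_def J_def prod_power_distrib
      by (intro prod.cong) (auto simp: frobenius_shift)
    also have "\<dots> = G (\<sigma> ` S)"
      using that \<sigma> unfolding G_def J_def
      by (subst prod.reindex) (auto simp: bij_betw_def intro: inj_on_subset)
    finally show ?thesis .
  qed
  have "poly (lambda_poly q m j) x ^ q = (\<Sum>S\<in>J. G S ^ q)"
    unfolding poly_lambda_poly G_def J_def by (rule freshmans_dream_sum'[OF CHAR_prime q_eq])
  also have "\<dots> = (\<Sum>S\<in>J. G (\<sigma> ` S))"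
    using Frobenius_G by (rule sum.cong[OF refl])
  also have "\<dots> = (\<Sum>S\<in>J. G S)"
    unfolding J_def by (rule sum.reindex_bij_betw[OF bij_betw_image_card_subsets[OF \<sigma>]])
  also have "\<dots> = poly (lambda_poly q m j) x"
    unfolding poly_lambda_poly G_def J_def ..
  finally show ?thesis
    by (simp add: subfield_Fq_def)
qed

end

lemma lambda_poly_nonzero:
  assumes "q \<ge> 2" and "j \<le> m"
  shows "lambda_poly q m j \<noteq> (0 :: 'a::comm_ring_1 poly)"
proof -
  define J where "J = {S. S \<subseteq> {0..<m} \<and> card S = j}"
  have S0: "{0..<j} \<in> J"
    using assms(2) by (auto simp: J_def)
  have "coeff (lambda_poly q m j :: 'a poly) (\<Sum>i\<in>{0..<j}. q ^ i)
      = (\<Sum>S\<in>J. if S = {0..<j} then 1 else 0)"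
    unfolding lambda_poly_def coeff_sum coeff_monom J_def[symmetric]
  proof (intro sum.cong refl)
    fix S assume "S \<in> J"
    then have "S \<in> Pow {..<m}" and "{0..<j} \<in> Pow {..<m}"
      using S0 by (auto simp: J_def)
    then have "(\<Sum>i\<in>S. q ^ i) = (\<Sum>i\<in>{0..<j}. q ^ i) \<longleftrightarrow> S = {0..<j}"
      by (rule inj_on_eq_iff[OF inj_on_sum_power[OF assms(1)]])
    then show "(if (\<Sum>i\<in>S. q ^ i) = (\<Sum>i\<in>{0..<j}. q ^ i) then 1 else 0)
        = (if S = {0..<j} then 1 else (0::'a))"
      by simp
  qed
  moreover have "finite J"
    unfolding J_def by (rule finite_subset[of _ "Pow {0..<m}"]) auto
  ultimately have "coeff (lambda_poly q m j :: 'a poly) (\<Sum>i\<in>{0..<j}. q ^ i) = 1"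
    using S0 by (simp add: sum.delta)
  then show ?thesis
    by (intro notI) simp
qed

lemma degree_lambda_poly_less:
  assumes "q > 0" and "j < m"
  shows "degree (lambda_poly q m j :: 'a::comm_ring_1 poly) < (\<Sum>i<m. q ^ i)"
proof -
  have "degree (lambda_poly q m j :: 'a poly) \<le> (\<Sum>i<m. q ^ i) - 1"
    unfolding lambda_poly_def
  proof (intro degree_sum_le)
    show "finite {S. S \<subseteq> {0..<m} \<and> card S = j}"
      by (rule finite_subset[of _ "Pow {0..<m}"]) auto
  next
    fix S assume S: "S \<in> {S. S \<subseteq> {0..<m} \<and> card S = j}"
    then have "S \<noteq> {..<m}"
      using assms(2) by auto
    then obtain k where k: "k \<in> {..<m} - S"
      using S by auto
    have "(\<Sum>i<m. q ^ i) = (\<Sum>i\<in>{..<m} - S. q ^ i) + (\<Sum>i\<in>S. q ^ i)"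
      using S by (simp add: sum.subset_diff atLeast0LessThan)
    moreover have "q ^ k \<le> (\<Sum>i\<in>{..<m} - S. q ^ i)"
      using k by (intro member_le_sum) auto
    moreover have "q ^ k > 0"
      using assms(1) by simp
    ultimately have "(\<Sum>i\<in>S. q ^ i) \<le> (\<Sum>i<m. q ^ i) - 1"
      by linarith
    then show "degree (monom 1 (\<Sum>i\<in>S. q ^ i) :: 'a poly) \<le> (\<Sum>i<m. q ^ i) - 1"
      by (simp add: degree_monom_eq)
  qed
  moreover have "1 \<le> (\<Sum>i<m. q ^ i)"
    using assms(2) member_le_sum[of 0 "{..<m}" "(^) q"] by simp
  ultimately show ?thesis
    by linarith
qed

lemma lambda_poly_has_nonzero_value:
  assumes "card (UNIV :: 'a::{field,finite} set) = q ^ m" and "q \<ge> 2" and "j < m"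
  shows "\<exists>x::'a. poly (lambda_poly q m j) x \<noteq> 0"
proof (rule ccontr)
  assume "\<not> ?thesis"
  then have "{x::'a. poly (lambda_poly q m j) x = 0} = UNIV"
    by auto
  moreover have "lambda_poly q m j \<noteq> (0 :: 'a poly)"
    by (rule lambda_poly_nonzero) (use assms(2,3) in auto)
  ultimately have "q ^ m \<le> degree (lambda_poly q m j :: 'a poly)"
    using card_poly_roots_bound assms(1) by metis
  also have "\<dots> < (\<Sum>i<m. q ^ i)"
    using degree_lambda_poly_less[where 'a = 'a] assms(2,3) by simp
  also have "\<dots> \<le> (q - 1) * (\<Sum>i<m. q ^ i)"
    using mult_le_mono1[of 1 "q - 1" "\<Sum>i<m. q ^ i"] assms(2) by linarith
  also have "\<dots> = q ^ m - 1"
    using nat_geometric_sum assms(2) by simp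
  finally show False
    by simp
qed

lemma lambda_poly_has_nontrivial_root:
  assumes "card (UNIV :: 'a::{field,finite} set) = q ^ m" and "q \<ge> 2" and "0 < j" and "j < m"
    and "\<And>x. poly (lambda_poly q m j) x \<in> (subfield_Fq q :: 'a set)"
  shows "\<exists>x::'a. x \<noteq> 0 \<and> poly (lambda_poly q m j) x = 0"
proof (rule ccontr)
  assume no_root: "\<not> ?thesis"
  define L :: "'a poly" where "L = lambda_poly q m j"
  define P where "P = L ^ (q - 1) - 1"
  have "poly P x = 0" if "x \<noteq> 0" for x
    using subfield_Fq_power_q_minus_1[OF assms(5)[of x]] no_root that assms(2)
    by (auto simp: P_def L_def)
  then have "UNIV - {0} \<subseteq> {x. poly P x = 0}"
    by auto
  moreover have "poly P 0 = - 1"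
    using poly_lambda_poly_0[of q j m] assms(2,3) by (simp add: P_def L_def)
  then have "P \<noteq> 0"
    by auto
  ultimately have "card (UNIV - {0::'a}) \<le> degree P"
    using card_poly_roots_bound[of P] card_mono[of "{x. poly P x = 0}" "UNIV - {0}"] by fastforce
  also have "\<dots> \<le> degree L * (q - 1)"
    unfolding P_def by (intro degree_diff_le degree_power_le) simp
  finally have "q ^ m - 1 \<le> degree L * (q - 1)"
    using assms(1) by (simp add: card_Diff_singleton)
  moreover have "(q - 1) * (degree L + 1) \<le> (q - 1) * (\<Sum>i<m. q ^ i)"
    using degree_lambda_poly_less[where 'a = 'a, of q j m] assms(2,4) unfolding L_def
    by (intro mult_le_mono2) simp
  moreover have "(q - 1) * (\<Sum>i<m. q ^ i) = q ^ m - 1"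
    using nat_geometric_sum assms(2) by simp
  moreover have "(q - 1) * (degree L + 1) = degree L * (q - 1) + (q - 1)"
    by (simp add: distrib_left mult.commute)
  ultimately show False
    using assms(2) by linarith
qed

lemma range_poly_lambda_poly:
  assumes "card (UNIV :: 'a::{field,finite} set) = q ^ m" and "q \<ge> 2" and "0 < j" and "j < m"
    and "gcd j (q - 1) = 1"
    and in_subfield: "\<And>x. poly (lambda_poly q m j) x \<in> (subfield_Fq q :: 'a set)"
  shows "range (poly (lambda_poly q m j)) = (subfield_Fq q :: 'a set)"
proof (intro equalityI subsetI)
  fix a :: 'a assume a: "a \<in> subfield_Fq q"
  obtain x :: 'a where x: "poly (lambda_poly q m j) x \<noteq> 0"
    using lambda_poly_has_nonzero_value[OF assms(1,2,4)] by blast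
  have "a / poly (lambda_poly q m j) x \<in> subfield_Fq q"
    using a in_subfield by (rule subfield_Fq_divide)
  moreover have "bij_betw (\<lambda>c. c ^ j) (subfield_Fq q) (subfield_Fq q :: 'a set)"
    using assms(2,3,5) by (intro bij_betw_power_subfield_Fq) auto
  ultimately obtain c where c: "c \<in> subfield_Fq q" "c ^ j = a / poly (lambda_poly q m j) x"
    by (metis (no_types, lifting) bij_betw_iff_bijections)
  then have "poly (lambda_poly q m j) (c * x) = a"
    using x by (simp add: poly_lambda_poly_mult)
  then show "a \<in> range (poly (lambda_poly q m j))"
    by (metis rangeI)
qed (use in_subfield in auto)

lemma bij_mult_comp_homogeneous_iff:
  fixes L H :: "'a::{field,finite} \<Rightarrow> 'a"
  assumes L_onto: "range L = F"
    and L_root: "\<exists>x. x \<noteq> 0 \<and> L x = 0"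
    and L_homogeneous: "\<And>c x. c \<in> F \<Longrightarrow> L (c * x) = c ^ j * L x"
    and H_into: "\<And>y. y \<in> F \<Longrightarrow> H y \<in> F"
    and "j > 0"
  shows "bij (\<lambda>x. x * H (L x)) \<longleftrightarrow> H 0 \<noteq> 0 \<and> bij_betw (\<lambda>y. y * H y ^ j) F F"
proof -
  define f where "f x = x * H (L x)" for x
  define g where "g y = y * H y ^ j" for y
  have L_f: "L (f x) = g (L x)" for x
    using L_homogeneous[of "H (L x)" x] H_into L_onto unfolding f_def g_def
    by (auto simp: mult.commute)
  have g_into: "g ` F \<subseteq> F"
    using L_f L_onto by (auto simp flip: f_def) (metis rangeI)
  have "0 \<in> F"
    using L_root L_onto by (metis rangeI)
  show ?thesis
    unfolding f_def[symmetric] g_def[symmetric]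
  proof
    assume "bij f"
    have "H 0 \<noteq> 0"
    proof
      assume "H 0 = 0"
      obtain x where "x \<noteq> 0" "L x = 0"
        using L_root by blast
      then have "f x = f 0"
        using \<open>H 0 = 0\<close> by (simp add: f_def)
      then show False
        using \<open>bij f\<close> \<open>x \<noteq> 0\<close> by (metis bij_def injD)
    qed
    moreover have "F \<subseteq> g ` F"
    proof
      fix a assume "a \<in> F"
      then obtain z where "L z = a"
        using L_onto by blast
      moreover obtain x where "f x = z"
        using \<open>bij f\<close> by (metis bij_def surjD)
      ultimately show "a \<in> g ` F"
        using L_f L_onto by (metis rangeI image_eqI)
    qed
    ultimately show "H 0 \<noteq> 0 \<and> bij_betw g F F"
      using g_into finite_surj_inj[of F g] by (auto simp: bij_betw_def)
  next
    assume "H 0 \<noteq> 0 \<and> bij_betw g F F"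
    then have "H 0 \<noteq> 0" and g_inj: "inj_on g F"
      by (auto simp: bij_betw_def)
    have H_nonzero: "H y \<noteq> 0" if "y \<in> F" for y
    proof (cases "y = 0")
      case False
      then have "g y \<noteq> g 0"
        using g_inj that \<open>0 \<in> F\<close> by (metis inj_onD)
      then show ?thesis
        using \<open>j > 0\<close> by (auto simp: g_def)
    qed (use \<open>H 0 \<noteq> 0\<close> in simp)
    have "inj f"
    proof (rule injI)
      fix x x' assume "f x = f x'"
      then have "L x = L x'"
        using L_f g_inj L_onto by (metis inj_onD rangeI)
      then show "x = x'"
        using \<open>f x = f x'\<close> H_nonzero[of "L x"] L_onto by (auto simp: f_def)
    qed
    then show "bij f"
      using finite_UNIV_inj_surj[of f] by (simp add: bij_def)
  qed
qed

theorem theorem3p1: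
  fixes q m j :: nat and h :: "'a::{field,finite} poly"
  assumes "prime_power q"
    and "card (UNIV :: 'a set) = q ^ m"
    and "m > 1" and "1 \<le> j" and "j \<le> m - 1"
    and "gcd j (q - 1) = 1"
    and "\<forall>i. coeff h i \<in> subfield_Fq q"
  shows "permutes_set ([:0, 1:] * pcompose h (lambda_poly q m j)) UNIV
     \<longleftrightarrow> (poly h 0 \<noteq> 0 \<and> permutes_set ([:0, 1:] * h ^ j) (subfield_Fq q))"
proof -
  have "0 < j" and "j < m"
    using assms(3-5) by auto
  obtain k where q_eq: "q = CHAR('a) ^ k"
    using prime_power_card_imp_CHAR_power[OF assms(1,2)] assms(3) by auto
  have CHAR_prime: "prime CHAR('a)"
    by (intro prime_CHAR_semidom finite_imp_CHAR_pos) simp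
  have "q \<ge> 2"
    using assms(1) by (rule prime_power_ge_2)
  have L_into: "poly (lambda_poly q m j) x \<in> subfield_Fq q" for x :: 'a
    using poly_lambda_poly_in_subfield[OF CHAR_prime q_eq] field_power_card_eq_self[of x] assms(2,3)
    by simp
  have poly_f: "poly ([:0, 1:] * pcompose h (lambda_poly q m j))
      = (\<lambda>x. x * poly h (poly (lambda_poly q m j) x))"
    by (simp add: fun_eq_iff poly_pcompose)
  have poly_g: "poly ([:0, 1:] * h ^ j) = (\<lambda>y. y * poly h y ^ j)"
    by (simp add: fun_eq_iff)
  show ?thesis
    unfolding permutes_set_def poly_f poly_g
  proof (rule bij_mult_comp_homogeneous_iff[where L = "poly (lambda_poly q m j)" and H = "poly h"])
    show "range (poly (lambda_poly q m j)) = (subfield_Fq q :: 'a set)"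
      using range_poly_lambda_poly[OF assms(2) \<open>q \<ge> 2\<close> \<open>0 < j\<close> \<open>j < m\<close> assms(6) L_into] .
    show "\<exists>x::'a. x \<noteq> 0 \<and> poly (lambda_poly q m j) x = 0"
      using lambda_poly_has_nontrivial_root[OF assms(2) \<open>q \<ge> 2\<close> \<open>0 < j\<close> \<open>j < m\<close> L_into] .
    show "poly h y \<in> subfield_Fq q" if "y \<in> subfield_Fq q" for y
      using subfield_Fq_poly[OF CHAR_prime q_eq assms(7) that] .
  qed (simp_all add: poly_lambda_poly_mult \<open>0 < j\<close>)
qed

end
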